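(* Let $X$ be a Banach lattice and $S$ a convex $C_0$-semigroup on $X$. Let $(x_n)_{n\in\mathbb N}$, $(y_n)_{n\in\mathbb N}$ be sequences in $X$ with $x_n\to x\in X$ and $y_n\to y\in X$, and let $(h_n)_{n\in\mathbb N}$ be a sequence in $(0,\infty)$ with $h_n\downarrow0$. Then $S_{x_n}(h_n)y_n\to y$.
   Context: An operator $T\colon X\to X$ is convex if $T(\lambda x+(1-\lambda)y)\le\lambda Tx+(1-\lambda)Ty$ for all $x,y\in X$, $\lambda\in[0,1]$, and bounded if $\sup_{\|x\|\le r}\|Tx\|<\infty$ for all $r>0$. A convex $C_0$-semigroup is a family $(S(t))_{t\ge0}$ of bounded convex operators $X\to X$ with $S(0)=\mathrm{id}$, $S(t+s)=S(t)S(s)$ for all $s,t\ge0$, and $S(t)x\to x$ as $t\downarrow0$ for all $x$. For $t\ge0$ and $x,y\in X$, $S_x(t)y:=S(t)(x+y)-S(t)x$. *)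

theory Defs
  imports "HOL-Analysis.Analysis"
begin

class banach_lattice = banach + ordered_real_vector + lattice +
  assumes lattice_norm: "sup x (- x) \<le> sup y (- y) \<Longrightarrow> norm x \<le> norm y"

definition convex_op :: "('a::banach_lattice \<Rightarrow> 'a) \<Rightarrow> bool" where
  "convex_op T \<longleftrightarrow> (\<forall>x y. \<forall>l::real. 0 \<le> l \<and> l \<le> 1 \<longrightarrow>
      T (l *\<^sub>R x + (1 - l) *\<^sub>R y) \<le> l *\<^sub>R T x + (1 - l) *\<^sub>R T y)"

definition bounded_op :: "('a::real_normed_vector \<Rightarrow> 'b::real_normed_vector) \<Rightarrow> bool" where
  "bounded_op T \<longleftrightarrow> (\<forall>r>0. \<exists>C. \<forall>x. norm x \<le> r \<longrightarrow> norm (T x) \<le> C)"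

definition convex_C0_semigroup :: "(real \<Rightarrow> 'a::banach_lattice \<Rightarrow> 'a) \<Rightarrow> bool" where
  "convex_C0_semigroup S \<longleftrightarrow>
     (\<forall>t\<ge>0. convex_op (S t) \<and> bounded_op (S t)) \<and>
     S 0 = id \<and>
     (\<forall>s\<ge>0. \<forall>t\<ge>0. S (t + s) = S t \<circ> S s) \<and>
     (\<forall>x. ((\<lambda>t. S t x) \<longlongrightarrow> x) (at_right 0))"

definition shifted_sg :: "(real \<Rightarrow> 'a::real_vector \<Rightarrow> 'a) \<Rightarrow> 'a \<Rightarrow> real \<Rightarrow> 'a \<Rightarrow> 'a" where
  "shifted_sg S x t y = S t (x + y) - S t x"

end

theory Submission
  imports Defs "HOL-Library.Lattice_Algebras"
begin

(* In a Banach lattice the lattice norm turns the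
   order inequalities furnished by convexity into norm bounds, so a convex operator bounded on a
   ball is Lipschitz on the concentric ball of half the radius, and in particular continuous.
   Since S(h n) w -> w, the family is pointwise bounded, and Baire's theorem gives a ball on
   which it is uniformly bounded; reflection through an arbitrary point spreads this bound to a
   neighbourhood of every point. The family is therefore locally equi-Lipschitz, which upgrades
   pointwise convergence to S(h n) z_n -> z whenever z_n -> z; apply this to x_n + y_n and x_n. *)

context banach_lattice
begin

subclass lattice_ab_group_add ..

end

lemma sup_uminus_nonneg: "0 \<le> sup a (- a)" for a :: "'a::lattice_ab_group_add"
proof -
  have "a + - a \<le> sup a (- a) + sup a (- a)"
    by (intro add_mono sup_ge1 sup_ge2)
  then show ?thesis by simp
qed

lemma sup_uminus_eq_self: "0 \<le> a \<Longrightarrow> sup a (- a) = a" for a :: "'a::lattice_ab_group_add"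
  by (simp add: sup_absorb1 order_trans[of "- a" 0 a])

lemma norm_sup_uminus: "norm (sup x (- x)) = norm x" for x :: "'a::banach_lattice"
proof -
  have "sup (sup x (- x)) (- sup x (- x)) = sup x (- x)"
    by (rule sup_uminus_eq_self[OF sup_uminus_nonneg])
  then show ?thesis
    using lattice_norm[of x "sup x (- x)"] lattice_norm[of "sup x (- x)" x] by simp
qed

lemma norm_sandwich_le:
  fixes a b c :: "'a::banach_lattice"
  assumes "a \<le> b" "b \<le> c"
  shows "norm b \<le> norm a + norm c"
proof -
  define w where "w = sup a (- a) + sup c (- c)"
  have a0: "0 \<le> sup a (- a)" and c0: "0 \<le> sup c (- c)"
    by (rule sup_uminus_nonneg)+
  have "b \<le> w"
    using assms(2) a0 unfolding w_def by (meson add_increasing order_trans sup_ge1)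
  moreover have "- b \<le> w"
    using assms(1) unfolding w_def
    by (meson add_increasing2[OF c0 order_refl] neg_le_iff_le order_trans sup_ge2)
  moreover have "sup w (- w) = w"
    using a0 c0 unfolding w_def by (intro sup_uminus_eq_self add_nonneg_nonneg)
  ultimately have "sup b (- b) \<le> sup w (- w)" by simp
  then have "norm b \<le> norm w" by (rule lattice_norm)
  also have "\<dots> \<le> norm a + norm c"
    using norm_triangle_ineq[of "sup a (- a)" "sup c (- c)"] by (simp add: w_def norm_sup_uminus)
  finally show ?thesis .
qed

lemma convex_op_midpoint:
  fixes T :: "'a::banach_lattice \<Rightarrow> 'a"
  assumes "convex_op T" and "a + b = 2 *\<^sub>R w"
  shows "T w \<le> (1/2) *\<^sub>R T a + (1/2) *\<^sub>R T b"
proof -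
  have "w = (1/2) *\<^sub>R a + (1 - 1/2) *\<^sub>R b"
    using arg_cong[OF assms(2), of "scaleR (1/2)"] by (simp add: scaleR_add_right)
  then show ?thesis
    using assms(1)[unfolded convex_op_def, rule_format, of "1/2" a b] by simp
qed

lemma convex_op_secant_le:
  fixes T :: "'a::banach_lattice \<Rightarrow> 'a"
  assumes "convex_op T" and "0 < l" "l \<le> 1"
  shows "T y - T x \<le> l *\<^sub>R (T (x + (1/l) *\<^sub>R (y - x)) - T x)"
proof -
  define z where "z = x + (1/l) *\<^sub>R (y - x)"
  have "y = l *\<^sub>R z + (1 - l) *\<^sub>R x"
    using assms(2) by (simp add: z_def algebra_simps)
  then have "T y \<le> l *\<^sub>R T z + (1 - l) *\<^sub>R T x"
    using assms unfolding convex_op_def by simp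
  then show ?thesis
    by (simp add: z_def algebra_simps)
qed

text \<open>The two secant inequalities from x through y and from y through x bound T y - T x
  from above and below; a lattice norm turns such an order sandwich into a norm bound.\<close>
lemma convex_op_norm_diff_le:
  fixes T :: "'a::banach_lattice \<Rightarrow> 'a"
  assumes "convex_op T" and "0 < l" "l \<le> 1"
    and "norm (T x) \<le> M" "norm (T y) \<le> M"
    and "norm (T (x + (1/l) *\<^sub>R (y - x))) \<le> M" "norm (T (y + (1/l) *\<^sub>R (x - y))) \<le> M"
  shows "norm (T y - T x) \<le> 4 * M * l"
proof -
  define z where "z = x + (1/l) *\<^sub>R (y - x)"
  define z' where "z' = y + (1/l) *\<^sub>R (x - y)"
  have upper: "T y - T x \<le> l *\<^sub>R (T z - T x)"
    unfolding z_def by (rule convex_op_secant_le[OF assms(1-3)])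
  have "T x - T y \<le> l *\<^sub>R (T z' - T y)"
    unfolding z'_def by (rule convex_op_secant_le[OF assms(1-3)])
  then have lower: "- (l *\<^sub>R (T z' - T y)) \<le> T y - T x"
    by (simp add: algebra_simps)
  have "norm (T y - T x) \<le> l * norm (T z' - T y) + l * norm (T z - T x)"
    using norm_sandwich_le[OF lower upper] assms(2) by simp
  also have "\<dots> \<le> l * (2 * M) + l * (2 * M)"
    using assms(2,4-7) norm_triangle_ineq4[of "T z'" "T y"] norm_triangle_ineq4[of "T z" "T x"]
    unfolding z_def z'_def by (intro add_mono mult_left_mono) auto
  finally show ?thesis by simp
qed

lemma convex_op_lipschitz_on_cball:
  fixes T :: "'a::banach_lattice \<Rightarrow> 'a"
  assumes "convex_op T" and "0 < d"
    and bound: "\<And>w. w \<in> cball c (2 * d) \<Longrightarrow> norm (T w) \<le> M"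
  shows "(4 * M / d)-lipschitz_on (cball c d) T"
proof (rule lipschitz_onI)
  have "norm (T c) \<le> M"
    using bound assms(2) by simp
  then have M_nonneg: "0 \<le> M"
    using norm_ge_zero order_trans by blast
  then show "0 \<le> 4 * M / d"
    using assms(2) by simp
  fix x y assume x: "x \<in> cball c d" and y: "y \<in> cball c d"
  have far: "w \<in> cball c (2 * d)" if "u \<in> cball c d" "norm (w - u) \<le> d" for u w
    using that dist_triangle[of c w u] by (simp add: dist_norm norm_minus_commute)
  define l where "l = norm (y - x) / d"
  have "norm (T y - T x) \<le> 4 * M * l"
  proof (cases "x = y")
    case False
    then have "0 < l" using assms(2) by (simp add: l_def)
    show ?thesis
    proof (cases "l \<le> 1")
      case True
      have "norm ((1/l) *\<^sub>R (y - x)) = d" "norm ((1/l) *\<^sub>R (x - y)) = d"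
        using \<open>0 < l\<close> assms(2) False by (simp_all add: l_def norm_minus_commute)
      then show ?thesis
        using x y assms(2) \<open>0 < l\<close> True
        by (intro convex_op_norm_diff_le[OF assms(1)] bound far[of x] far[of y]) auto
    next
      case False
      have "norm (T x) \<le> M" "norm (T y) \<le> M"
        using x y assms(2) by (auto intro: bound)
      then have "norm (T y - T x) \<le> 2 * M"
        using norm_triangle_ineq4[of "T y" "T x"] by simp
      also have "\<dots> \<le> 4 * M * l"
        using mult_left_mono[of 1 l "4 * M"] False M_nonneg by simp
      finally show ?thesis .
    qed
  qed (simp add: l_def)
  then show "dist (T x) (T y) \<le> 4 * M / d * dist x y"
    by (simp add: l_def dist_norm norm_minus_commute)
qed

lemma convex_op_continuous:
  fixes T :: "'a::banach_lattice \<Rightarrow> 'a"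
  assumes "convex_op T" and "bounded_op T"
  shows "continuous_on UNIV T"
proof (rule continuous_at_imp_continuous_on, intro ballI)
  fix x0 :: 'a
  obtain M where M: "\<And>w. norm w \<le> norm x0 + 2 \<Longrightarrow> norm (T w) \<le> M"
    using assms(2) unfolding bounded_op_def by (metis add_nonneg_pos norm_ge_zero zero_less_numeral)
  have "w \<in> cball x0 (2 * 1) \<Longrightarrow> norm (T w) \<le> M" for w
    using norm_triangle_ineq2[of w x0] by (intro M) (simp add: dist_norm norm_minus_commute)
  then have "continuous_on (cball x0 1) T"
    by (rule lipschitz_on_continuous_on[OF convex_op_lipschitz_on_cball[OF assms(1) zero_less_one]])
  then show "isCont T x0"
    using interior_maximal[OF ball_subset_cball open_ball, of x0 1]
    by (intro continuous_on_interior) auto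
qed

text \<open>A bound on a ball about w0 moves to the ball of half the radius about any z: w is the
  midpoint of 2z - w0 and a point of the ball about w0, and so is its reflection 2z - w
  through z, while z is the midpoint of w and 2z - w.\<close>
lemma convex_op_norm_bound_transfer:
  fixes T :: "'a::banach_lattice \<Rightarrow> 'a"
  assumes "convex_op T"
    and bound: "\<And>q. q \<in> cball w0 e \<Longrightarrow> norm (T q) \<le> K"
    and w: "w \<in> cball z (e / 2)"
  shows "norm (T w) \<le> 2 * norm (T z) + norm (T (2 *\<^sub>R z - w0)) + K"
proof -
  define p where "p = 2 *\<^sub>R z - w0"
  define q where "q = w0 + 2 *\<^sub>R (w - z)"
  define q' where "q' = w0 + 2 *\<^sub>R (z - w)"
  have Tq: "norm (T q) \<le> K" and Tq': "norm (T q') \<le> K"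
    using w by (auto intro!: bound simp: q_def q'_def dist_norm norm_minus_commute)
  have upper: "T w \<le> (1/2) *\<^sub>R T p + (1/2) *\<^sub>R T q"
    by (rule convex_op_midpoint[OF assms(1)]) (simp add: p_def q_def algebra_simps scaleR_2)
  have "T (2 *\<^sub>R z - w) \<le> (1/2) *\<^sub>R T p + (1/2) *\<^sub>R T q'"
    by (rule convex_op_midpoint[OF assms(1)]) (simp add: p_def q'_def algebra_simps scaleR_2)
  moreover have "T z \<le> (1/2) *\<^sub>R T w + (1/2) *\<^sub>R T (2 *\<^sub>R z - w)"
    by (rule convex_op_midpoint[OF assms(1)]) (simp add: algebra_simps scaleR_2)
  then have "2 *\<^sub>R T z \<le> T w + T (2 *\<^sub>R z - w)"
    using scaleR_left_mono[of _ _ 2] by (fastforce simp: scaleR_add_right)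
  ultimately have "2 *\<^sub>R T z \<le> T w + ((1/2) *\<^sub>R T p + (1/2) *\<^sub>R T q')"
    by (meson add_left_mono order_trans)
  then have lower: "2 *\<^sub>R T z - ((1/2) *\<^sub>R T p + (1/2) *\<^sub>R T q') \<le> T w"
    by (simp add: diff_le_eq)
  have "norm (T w) \<le> norm (2 *\<^sub>R T z - ((1/2) *\<^sub>R T p + (1/2) *\<^sub>R T q'))
      + norm ((1/2) *\<^sub>R T p + (1/2) *\<^sub>R T q)"
    by (rule norm_sandwich_le[OF lower upper])
  also have "\<dots> \<le> (2 * norm (T z) + (1/2 * norm (T p) + 1/2 * norm (T q')))
      + (1/2 * norm (T p) + 1/2 * norm (T q))"
    by (intro add_mono order_trans[OF norm_triangle_ineq4] order_trans[OF norm_triangle_ineq]) auto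
  also have "\<dots> \<le> 2 * norm (T z) + norm (T p) + K"
    using Tq Tq' by simp
  finally show ?thesis by (simp add: p_def)
qed

lemma closed_cover_has_interior:
  fixes F :: "nat \<Rightarrow> 'a::complete_space set"
  assumes "\<And>k. closed (F k)" and "(\<Union>k. F k) = UNIV"
  obtains k where "interior (F k) \<noteq> {}"
proof (rule ccontr)
  assume "\<not> thesis"
  with that have "\<And>G. G \<in> range F \<Longrightarrow> closedin euclidean G \<and> euclidean interior_of G = {}"
    using assms(1) by (auto simp: closed_closedin[symmetric])
  then have "euclidean interior_of (\<Union>(range F)) = {}"
    by (intro Baire_category_alt) (auto simp: completely_metrizable_space_euclidean)
  with assms(2) show False by simp
qed

text \<open>Each operator is continuous, so the sets where the family is bounded by k are closed,
  and Baire's theorem applies.\<close>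
lemma convex_ops_uniformly_bounded_on_cball:
  fixes T :: "'i \<Rightarrow> 'a::banach_lattice \<Rightarrow> 'a"
  assumes "\<And>i. convex_op (T i)" and "\<And>i. bounded_op (T i)"
    and pointwise: "\<And>w. bounded (range (\<lambda>i. T i w))"
  obtains w0 e K where "0 < e" and "\<And>i q. q \<in> cball w0 e \<Longrightarrow> norm (T i q) \<le> K"
proof -
  define F where "F k = (\<Inter>i. {w. norm (T i w) \<le> real k})" for k :: nat
  have "closed (F k)" for k
    unfolding F_def using convex_op_continuous[OF assms(1,2)]
    by (intro closed_INT ballI closed_Collect_le continuous_on_norm continuous_on_const) auto
  moreover have "w \<in> (\<Union>k. F k)" for w
  proof -
    obtain B where "\<And>i. norm (T i w) \<le> B"
      using pointwise[of w] by (auto simp: bounded_iff)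
    then have "w \<in> F (nat \<lceil>B\<rceil>)"
      unfolding F_def by (auto intro: order_trans[OF _ real_nat_ceiling_ge])
    then show ?thesis by blast
  qed
  then have "(\<Union>k. F k) = UNIV" by blast
  ultimately obtain k where "interior (F k) \<noteq> {}"
    by (rule closed_cover_has_interior)
  then obtain w0 where "w0 \<in> interior (F k)" by blast
  then obtain e where "0 < e" "cball w0 e \<subseteq> interior (F k)"
    using open_contains_cball open_interior by blast
  then have "0 < e" "cball w0 e \<subseteq> F k"
    using interior_subset by blast+
  then show thesis
    by (intro that[of e w0 "real k"]) (auto simp: F_def)
qed

lemma convex_ops_locally_equilipschitz:
  fixes T :: "'i \<Rightarrow> 'a::banach_lattice \<Rightarrow> 'a"
  assumes "\<And>i. convex_op (T i)" and "\<And>i. bounded_op (T i)"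
    and pointwise: "\<And>w. bounded (range (\<lambda>i. T i w))"
  obtains d L where "0 < d" and "\<And>i. L-lipschitz_on (cball z d) (T i)"
proof -
  obtain w0 e K where "0 < e" and K: "\<And>i q. q \<in> cball w0 e \<Longrightarrow> norm (T i q) \<le> K"
    using convex_ops_uniformly_bounded_on_cball[OF assms] by metis
  obtain Bz where Bz: "\<And>i. norm (T i z) \<le> Bz"
    using pointwise[of z] unfolding bounded_iff by auto
  obtain Bp where Bp: "\<And>i. norm (T i (2 *\<^sub>R z - w0)) \<le> Bp"
    using pointwise[of "2 *\<^sub>R z - w0"] unfolding bounded_iff by auto
  have bound: "norm (T i w) \<le> 2 * Bz + Bp + K" if "w \<in> cball z (2 * (e / 4))" for i w
  proof -
    have "norm (T i w) \<le> 2 * norm (T i z) + norm (T i (2 *\<^sub>R z - w0)) + K"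
      using that K by (intro convex_op_norm_bound_transfer[OF assms(1)]) auto
    then show ?thesis
      using Bz[of i] Bp[of i] by linarith
  qed
  have "0 < e / 4"
    using \<open>0 < e\<close> by simp
  then show thesis
    using convex_op_lipschitz_on_cball[OF assms(1) _ bound] that by blast
qed

lemma convex_ops_tendsto_diagonal:
  fixes T :: "nat \<Rightarrow> 'a::banach_lattice \<Rightarrow> 'a"
  assumes "\<And>n. convex_op (T n)" and "\<And>n. bounded_op (T n)"
    and pointwise: "\<And>w. (\<lambda>n. T n w) \<longlonglongrightarrow> L w"
    and "zs \<longlonglongrightarrow> z"
  shows "(\<lambda>n. T n (zs n)) \<longlonglongrightarrow> L z"
proof -
  obtain d C where "0 < d" and lip: "\<And>n. C-lipschitz_on (cball z d) (T n)"
    using convex_ops_locally_equilipschitz[OF assms(1,2) convergent_imp_bounded[OF pointwise]]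
    by blast
  have "eventually (\<lambda>n. zs n \<in> cball z d) sequentially"
    using tendstoD[OF assms(4) \<open>0 < d\<close>] by (auto elim: eventually_mono simp: dist_commute)
  then have "eventually (\<lambda>n. norm (T n (zs n) - T n z) \<le> C * norm (zs n - z)) sequentially"
    by (rule eventually_mono) (use \<open>0 < d\<close> in \<open>intro lipschitz_on_normD[OF lip]; simp\<close>)
  moreover have "(\<lambda>n. C * norm (zs n - z)) \<longlonglongrightarrow> 0"
    using tendsto_norm_zero[OF LIM_zero[OF assms(4)]] by (rule tendsto_mult_right_zero)
  ultimately have "(\<lambda>n. T n (zs n) - T n z) \<longlonglongrightarrow> 0"
    by (rule Lim_null_comparison)
  then have "(\<lambda>n. (T n (zs n) - T n z) + T n z) \<longlonglongrightarrow> 0 + L z"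
    by (intro tendsto_add pointwise)
  then show ?thesis by simp
qed

theorem corollary2p6:
  fixes S :: "real \<Rightarrow> 'a::banach_lattice \<Rightarrow> 'a"
    and xs ys :: "nat \<Rightarrow> 'a" and x y :: 'a and h :: "nat \<Rightarrow> real"
  assumes "convex_C0_semigroup S"
    and "xs \<longlonglongrightarrow> x" and "ys \<longlonglongrightarrow> y"
    and "\<And>n. h n > 0" and "decseq h" and "h \<longlonglongrightarrow> 0"
  shows "(\<lambda>n. shifted_sg S (xs n) (h n) (ys n)) \<longlonglongrightarrow> y"
proof -
  have "convex_op (S (h n))" "bounded_op (S (h n))" for n
    using assms(1,4) unfolding convex_C0_semigroup_def by (auto simp: less_imp_le)
  moreover have "(\<lambda>n. S (h n) w) \<longlonglongrightarrow> w" for w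
  proof -
    have "filterlim h (at_right 0) sequentially"
      using assms(4,6) by (intro tendsto_imp_filterlim_at_right) auto
    moreover have "((\<lambda>t. S t w) \<longlongrightarrow> w) (at_right 0)"
      using assms(1) unfolding convex_C0_semigroup_def by blast
    ultimately show ?thesis by (rule filterlim_compose[rotated])
  qed
  ultimately have diagonal: "(\<lambda>n. S (h n) (zs n)) \<longlonglongrightarrow> z" if "zs \<longlonglongrightarrow> z" for zs z
    using that by (rule convex_ops_tendsto_diagonal[where L = "\<lambda>w. w"])
  then have "(\<lambda>n. S (h n) (xs n + ys n) - S (h n) (xs n)) \<longlonglongrightarrow> (x + y) - x"
    by (intro tendsto_diff diagonal tendsto_add assms(2,3))
  then show ?thesis by (simp add: shifted_sg_def)
qed

end
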